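(* Let $n\ge3$, $k\ge0$, let $S\subseteq\mathrm{Inc}(A,B)$ be an independent set in $G_n^k$, and let $i\in[n+k]$. Then (1) $\mathrm{DFEL}(i,S)$ is a subset of $\mathrm{Inc}(A,B)$ that is independent in $G_n^k$; (2) $\mathrm{DLEF}(i,S)$ is a subset of $\mathrm{Inc}(A,B)$ that is independent in $G_n^k$; (3) $|\mathrm{DFEL}(i,S)|+|\mathrm{DLEF}(i,S)|=2|S|$.
   Context: For integers $n\ge3$, $k\ge0$, the crown $S_n^k$ is the poset with ground set $A\cup B$, $A=\{a_1,\dots,a_{n+k}\}$, $B=\{b_1,\dots,b_{n+k}\}$, indices cyclic modulo $n+k$; elements of $A$ are pairwise incomparable, as are elements of $B$, and $a_i$ is incomparable to $b_j$ when $j\in\{i,\dots,i+k\}$ (mod $n+k$), while $a_i<b_j$ otherwise. $\mathrm{Inc}(A,B)$ is the set of pairs $(a,b)\in A\times B$ with $a$ incomparable to $b$; $G_n^k$ has vertex set $\mathrm{Inc}(A,B)$ with $(a,b)$ adjacent to $(x,y)$ iff $a<y$ and $x<b$. For an independent $S$ and $i\in[n+k]$, an ordered pair $((a,b),(x,y))$ of elements of $S$ is an expansion blocking pair at $i$ if $a=a_i$, $y=b_{i+k}$, and $x<b$ in $S_n^k$. $\mathrm{FEBP}(i,S)$ is the set of $(a,b)\in S$ for which some $(x,y)\in S$ makes $((a,b),(x,y))$ an expansion blocking pair at $i$; $\mathrm{LEBP}(i,S)$ is the set of $(x,y)\in S$ for which some $(a,b)\in S$ makes $((a,b),(x,y))$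 an expansion blocking pair at $i$. Define $\mathrm{DFEL}(i,S)=(S-\mathrm{FEBP}(i,S))\cup\{(x,b_{i+k+1}):(x,b_{i+k})\in\mathrm{LEBP}(i,S)\}$ and $\mathrm{DLEF}(i,S)=(S-\mathrm{LEBP}(i,S))\cup\{(a_{i-1},b):(a_i,b)\in\mathrm{FEBP}(i,S)\}$. *)

theory Defs
  imports Main
begin

text \<open>Crown S_n^k with indices 0..n+k-1 (cyclic mod n+k). The element a_i is
  encoded by the index i, b_j by j; a pair (a_i,b_j) in A x B by (i,j).\<close>

definition crown_inc :: "nat \<Rightarrow> nat \<Rightarrow> nat \<Rightarrow> nat \<Rightarrow> bool" where
  "crown_inc n k i j \<longleftrightarrow> i < n + k \<and> j < n + k \<and> (j + (n + k) - i) mod (n + k) \<le> k"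

definition crown_less :: "nat \<Rightarrow> nat \<Rightarrow> nat \<Rightarrow> nat \<Rightarrow> bool" where
  "crown_less n k i j \<longleftrightarrow> i < n + k \<and> j < n + k \<and> \<not> (j + (n + k) - i) mod (n + k) \<le> k"

definition Inc :: "nat \<Rightarrow> nat \<Rightarrow> (nat \<times> nat) set" where
  "Inc n k = {(i, j). crown_inc n k i j}"

definition G_adj :: "nat \<Rightarrow> nat \<Rightarrow> nat \<times> nat \<Rightarrow> nat \<times> nat \<Rightarrow> bool" where
  "G_adj n k u v \<longleftrightarrow> crown_less n k (fst u) (snd v) \<and> crown_less n k (fst v) (snd u)"

definition indep_G :: "nat \<Rightarrow> nat \<Rightarrow> (nat \<times> nat) set \<Rightarrow> bool" where
  "indep_G n k S \<longleftrightarrow> S \<subseteq> Inc n k \<and> (\<forall>u\<in>S. \<forall>v\<in>S. \<not> G_adj n k u v)"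

definition exp_blocking_pair :: "nat \<Rightarrow> nat \<Rightarrow> nat \<Rightarrow> (nat \<times> nat) set \<Rightarrow> nat \<times> nat \<Rightarrow> nat \<times> nat \<Rightarrow> bool" where
  "exp_blocking_pair n k i S u v \<longleftrightarrow> u \<in> S \<and> v \<in> S \<and> fst u = i \<and>
     snd v = (i + k) mod (n + k) \<and> crown_less n k (fst v) (snd u)"

definition FEBP :: "nat \<Rightarrow> nat \<Rightarrow> nat \<Rightarrow> (nat \<times> nat) set \<Rightarrow> (nat \<times> nat) set" where
  "FEBP n k i S = {u \<in> S. \<exists>v \<in> S. exp_blocking_pair n k i S u v}"

definition LEBP :: "nat \<Rightarrow> nat \<Rightarrow> nat \<Rightarrow> (nat \<times> nat) set \<Rightarrow> (nat \<times> nat) set" where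
  "LEBP n k i S = {v \<in> S. \<exists>u \<in> S. exp_blocking_pair n k i S u v}"

definition DFEL :: "nat \<Rightarrow> nat \<Rightarrow> nat \<Rightarrow> (nat \<times> nat) set \<Rightarrow> (nat \<times> nat) set" where
  "DFEL n k i S = (S - FEBP n k i S) \<union>
     {(x, (i + k + 1) mod (n + k)) | x. (x, (i + k) mod (n + k)) \<in> LEBP n k i S}"

definition DLEF :: "nat \<Rightarrow> nat \<Rightarrow> nat \<Rightarrow> (nat \<times> nat) set \<Rightarrow> (nat \<times> nat) set" where
  "DLEF n k i S = (S - LEBP n k i S) \<union>
     {((i + (n + k) - 1) mod (n + k), b) | b. (i, b) \<in> FEBP n k i S}"

end

theory Submission
  imports Defs
begin

text \<open>Write F and L for the first and last elements of the expansion blocking pairs at i.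
  Elements of F all have the form (a_i, b) and elements of L the form (x, b_{i+k}), so moving
  L to b_{i+k+1}, resp. F to a_{i-1}, is injective. A moved element (x, b_{i+k+1}) is not in S,
  being adjacent to its blocking partner (a_i, b); and it can be adjacent to some (c, d) of S only
  if c is incomparable to b_{i+k} but below b_{i+k+1}, which forces c = i and puts (c, d) into F,
  the part deleted from DFEL. Dually for DLEF. Hence |DFEL| = |S| - |F| + |L| and
  |DLEF| = |S| - |L| + |F|. The argument only needs n \<ge> 2.\<close>

lemma mod_less_twice:
  fixes a N :: nat
  assumes "a < 2 * N"
  shows "a mod N = (if a < N then a else a - N)"
  using assms le_mod_geq by auto

lemma mod_offset:
  fixes a b N :: nat
  assumes "a < N" "b < N"
  shows "(b + N - a) mod N = (if a \<le> b then b - a else b + N - a)"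
  using mod_less_twice[of "b + N - a" N] assms by auto

lemma crown_inc_iff:
  "crown_inc n k a b \<longleftrightarrow>
     a < n + k \<and> b < n + k \<and> (a \<le> b \<and> b \<le> a + k \<or> b < a \<and> b + n \<le> a)"
  unfolding crown_inc_def by (cases "a < n + k \<and> b < n + k"; cases "a \<le> b") (auto simp: mod_offset)

lemma crown_less_iff:
  "crown_less n k a b \<longleftrightarrow>
     a < n + k \<and> b < n + k \<and> (a \<le> b \<and> a + k < b \<or> b < a \<and> a < b + n)"
  unfolding crown_less_def by (cases "a < n + k \<and> b < n + k"; cases "a \<le> b") (auto simp: mod_offset)

lemma crown_inc_imp_not_less: "crown_inc n k a b \<Longrightarrow> \<not> crown_less n k a b"
  unfolding crown_inc_def crown_less_def by auto

lemma crown_not_less_imp_inc: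
  "a < n + k \<Longrightarrow> b < n + k \<Longrightarrow> \<not> crown_less n k a b \<Longrightarrow> crown_inc n k a b"
  unfolding crown_inc_def crown_less_def by auto

lemma G_adj_commute: "G_adj n k u v \<longleftrightarrow> G_adj n k v u"
  unfolding G_adj_def by auto

lemma finite_Inc: "finite (Inc n k)"
proof (rule finite_subset)
  show "Inc n k \<subseteq> {..<n + k} \<times> {..<n + k}"
    unfolding Inc_def crown_inc_def by auto
qed auto

lemma indep_G_Diff_Un:
  assumes "indep_G n k S" "N \<subseteq> Inc n k"
    and "\<And>w v. w \<in> N \<Longrightarrow> v \<in> (S - T) \<union> N \<Longrightarrow> \<not> G_adj n k w v"
  shows "indep_G n k ((S - T) \<union> N)"
  using assms G_adj_commute unfolding indep_G_def by blast

lemma card_Diff_Un_disjoint: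
  assumes "finite S" "T \<subseteq> S" "finite N" "N \<inter> S = {}"
  shows "card ((S - T) \<union> N) + card T = card S + card N"
proof -
  have "card ((S - T) \<union> N) = card (S - T) + card N"
    using assms by (intro card_Un_disjoint) auto
  moreover have "card (S - T) + card T = card S"
    using assms(1,2) by (metis card_Diff_subset card_mono finite_subset le_add_diff_inverse2)
  ultimately show ?thesis by simp
qed

lemma card_image_replace_snd:
  assumes "\<And>v. v \<in> A \<Longrightarrow> snd v = c"
  shows "card ((\<lambda>(x, y). (x, d)) ` A) = card A"
  using assms by (intro card_image inj_onI) (auto simp: split_beta prod_eq_iff)

lemma card_image_replace_fst:
  assumes "\<And>v. v \<in> A \<Longrightarrow> fst v = c"
  shows "card ((\<lambda>(x, y). (d, y)) ` A) = card A"
  using assms by (intro card_image inj_onI) (auto simp: split_beta prod_eq_iff)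

lemma mem_FEBP_iff:
  "u \<in> FEBP n k i S \<longleftrightarrow>
     u \<in> S \<and> fst u = i \<and> (\<exists>x. (x, (i + k) mod (n + k)) \<in> S \<and> crown_less n k x (snd u))"
  unfolding FEBP_def exp_blocking_pair_def by (auto; metis fst_conv snd_conv)

lemma mem_LEBP_iff:
  "v \<in> LEBP n k i S \<longleftrightarrow>
     v \<in> S \<and> snd v = (i + k) mod (n + k) \<and> (\<exists>b. (i, b) \<in> S \<and> crown_less n k (fst v) b)"
  unfolding LEBP_def exp_blocking_pair_def by (auto; metis fst_conv snd_conv)

lemma DFEL_eq:
  "DFEL n k i S = (S - FEBP n k i S) \<union> (\<lambda>(x, y). (x, (i + k + 1) mod (n + k))) ` LEBP n k i S"
  unfolding DFEL_def by (force simp: mem_LEBP_iff)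

lemma DLEF_eq:
  "DLEF n k i S = (S - LEBP n k i S) \<union> (\<lambda>(x, y). ((i + (n + k) - 1) mod (n + k), y)) ` FEBP n k i S"
  unfolding DLEF_def by (force simp: mem_FEBP_iff)

context
  fixes n k i :: nat
  assumes two_le_n: "2 \<le> n" and i_less: "i < n + k"
begin

lemma index_add_cases:
  "n \<le> i \<and> (i + k) mod (n + k) + n = i \<or> (i + k) mod (n + k) = i + k \<and> i + k < n + k"
  using mod_less_twice[of "i + k" "n + k"] i_less by auto

lemma index_add_Suc_cases:
  "n \<le> i + 1 \<and> (i + k + 1) mod (n + k) + n = i + 1 \<or>
   (i + k + 1) mod (n + k) = i + k + 1 \<and> i + k + 1 < n + k"
  using mod_less_twice[of "i + k + 1" "n + k"] i_less two_le_n by auto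

lemma index_pred_cases:
  "i = 0 \<and> (i + (n + k) - 1) mod (n + k) + 1 = n + k \<or> 0 < i \<and> (i + (n + k) - 1) mod (n + k) + 1 = i"
  using mod_less_twice[of "i + (n + k) - 1" "n + k"] i_less by auto

lemma crown_inc_succ_of_blocking:
  assumes "crown_inc n k i b" "crown_inc n k x ((i + k) mod (n + k))" "crown_less n k x b"
  shows "crown_inc n k x ((i + k + 1) mod (n + k))"
  using assms i_less index_add_cases index_add_Suc_cases unfolding crown_inc_iff crown_less_iff
  by (elim disjE conjE; linarith)

lemma crown_less_succ_eq:
  assumes "crown_inc n k c ((i + k) mod (n + k))" "crown_less n k c ((i + k + 1) mod (n + k))"
  shows "c = i"
  using assms i_less index_add_cases index_add_Suc_cases unfolding crown_inc_iff crown_less_iff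
  by (elim disjE conjE; linarith)

lemma crown_less_succ: "crown_less n k i ((i + k + 1) mod (n + k))"
  using two_le_n i_less index_add_Suc_cases unfolding crown_less_iff
  by (elim disjE conjE; linarith)

lemma crown_inc_pred:
  assumes "crown_inc n k i b" "b \<noteq> (i + k) mod (n + k)"
  shows "crown_inc n k ((i + (n + k) - 1) mod (n + k)) b"
  using assms i_less index_add_cases index_pred_cases unfolding crown_inc_iff
  by (elim disjE conjE; linarith)

lemma crown_less_pred_eq:
  assumes "crown_inc n k i d" "crown_less n k ((i + (n + k) - 1) mod (n + k)) d"
  shows "d = (i + k) mod (n + k)"
  using assms i_less index_add_cases index_pred_cases unfolding crown_inc_iff crown_less_iff
  by (elim disjE conjE; linarith)

lemma crown_less_pred: "crown_less n k ((i + (n + k) - 1) mod (n + k)) ((i + k) mod (n + k))"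
  using two_le_n i_less index_add_cases index_pred_cases unfolding crown_less_iff
  by (elim disjE conjE; linarith)

context
  fixes S :: "(nat \<times> nat) set"
  assumes indep_S: "indep_G n k S"
begin

abbreviation expanded_LEBP :: "(nat \<times> nat) set" where
  "expanded_LEBP \<equiv> (\<lambda>(x, y). (x, (i + k + 1) mod (n + k))) ` LEBP n k i S"

abbreviation expanded_FEBP :: "(nat \<times> nat) set" where
  "expanded_FEBP \<equiv> (\<lambda>(x, y). ((i + (n + k) - 1) mod (n + k), y)) ` FEBP n k i S"

lemma mem_S_crown_inc: "(a, b) \<in> S \<Longrightarrow> crown_inc n k a b"
  using indep_S unfolding indep_G_def Inc_def by auto

lemma mem_S_not_adj: "u \<in> S \<Longrightarrow> v \<in> S \<Longrightarrow> \<not> G_adj n k u v"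
  using indep_S unfolding indep_G_def by auto

lemma finite_S: "finite S"
  using indep_S finite_Inc finite_subset unfolding indep_G_def by blast

lemma expanded_LEBP_subset_Inc: "expanded_LEBP \<subseteq> Inc n k"
proof
  fix w assume "w \<in> expanded_LEBP"
  then obtain x b where "w = (x, (i + k + 1) mod (n + k))" "(x, (i + k) mod (n + k)) \<in> S" "(i, b) \<in> S" "crown_less n k x b"
    by (force simp: mem_LEBP_iff)
  then show "w \<in> Inc n k"
    using crown_inc_succ_of_blocking mem_S_crown_inc unfolding Inc_def by auto
qed

lemma expanded_LEBP_disjoint: "expanded_LEBP \<inter> S = {}"
proof -
  have "(x, (i + k + 1) mod (n + k)) \<notin> S" if xL: "(x, (i + k) mod (n + k)) \<in> LEBP n k i S" for x
  proof -
    obtain b where "(i, b) \<in> S" "crown_less n k x b"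
      using xL by (auto simp: mem_LEBP_iff)
    then show ?thesis
      using mem_S_not_adj crown_less_succ unfolding G_adj_def by fastforce
  qed
  then show ?thesis by (force simp: mem_LEBP_iff)
qed

lemma expanded_LEBP_not_adj:
  assumes "w \<in> expanded_LEBP" "v \<in> DFEL n k i S"
  shows "\<not> G_adj n k w v"
proof
  assume adj: "G_adj n k w v"
  from assms(1) obtain x where w: "w = (x, (i + k + 1) mod (n + k))" and xL: "(x, (i + k) mod (n + k)) \<in> LEBP n k i S"
    by (force simp: mem_LEBP_iff)
  have xS: "(x, (i + k) mod (n + k)) \<in> S" and x_inc: "crown_inc n k x ((i + k + 1) mod (n + k))"
    using xL assms(1) w expanded_LEBP_subset_Inc by (auto simp: mem_LEBP_iff Inc_def)
  show False
  proof (cases "v \<in> S - FEBP n k i S")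
    case True
    obtain c d where v: "v = (c, d)" by force
    have cdS: "(c, d) \<in> S" using True v by auto
    have x_less_d: "crown_less n k x d" and c_less: "crown_less n k c ((i + k + 1) mod (n + k))"
      using adj v w unfolding G_adj_def by auto
    have "\<not> crown_less n k c ((i + k) mod (n + k))"
      using mem_S_not_adj[OF xS cdS] x_less_d unfolding G_adj_def by auto
    then have "crown_inc n k c ((i + k) mod (n + k))"
      using crown_not_less_imp_inc mem_S_crown_inc[OF cdS] mem_S_crown_inc[OF xS]
      unfolding crown_inc_def by blast
    then have "c = i" using crown_less_succ_eq c_less by blast
    then have "(c, d) \<in> FEBP n k i S" using cdS xS x_less_d by (auto simp: mem_FEBP_iff)
    then show False using True v by auto
  next
    case False
    then obtain x' where "v = (x', (i + k + 1) mod (n + k))" using assms(2) unfolding DFEL_eq by auto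
    then show False using adj w x_inc crown_inc_imp_not_less unfolding G_adj_def by auto
  qed
qed

lemma indep_DFEL: "indep_G n k (DFEL n k i S)"
  unfolding DFEL_eq using expanded_LEBP_not_adj
  by (intro indep_G_Diff_Un indep_S expanded_LEBP_subset_Inc) (auto simp: DFEL_eq)

lemma card_DFEL: "card (DFEL n k i S) + card (FEBP n k i S) = card S + card (LEBP n k i S)"
proof -
  have "card expanded_LEBP = card (LEBP n k i S)"
    by (rule card_image_replace_snd) (simp add: mem_LEBP_iff)
  moreover have "FEBP n k i S \<subseteq> S" "LEBP n k i S \<subseteq> S"
    by (auto simp: mem_FEBP_iff mem_LEBP_iff)
  ultimately show ?thesis
    unfolding DFEL_eq using finite_S expanded_LEBP_disjoint
    by (subst card_Diff_Un_disjoint) (auto intro: finite_subset)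
qed

lemma expanded_FEBP_subset_Inc: "expanded_FEBP \<subseteq> Inc n k"
proof
  fix w assume "w \<in> expanded_FEBP"
  then obtain x b where w: "w = ((i + (n + k) - 1) mod (n + k), b)" and bS: "(i, b) \<in> S"
    and xS: "(x, (i + k) mod (n + k)) \<in> S" and x_less_b: "crown_less n k x b"
    by (force simp: mem_FEBP_iff)
  have "b \<noteq> (i + k) mod (n + k)"
    using x_less_b mem_S_crown_inc[OF xS] crown_inc_imp_not_less by blast
  then show "w \<in> Inc n k"
    using crown_inc_pred mem_S_crown_inc[OF bS] w unfolding Inc_def by auto
qed

lemma expanded_FEBP_disjoint: "expanded_FEBP \<inter> S = {}"
proof -
  have "((i + (n + k) - 1) mod (n + k), b) \<notin> S" if bF: "(i, b) \<in> FEBP n k i S" for b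
  proof -
    obtain x where "(x, (i + k) mod (n + k)) \<in> S" "crown_less n k x b"
      using bF by (auto simp: mem_FEBP_iff)
    then show ?thesis
      using mem_S_not_adj crown_less_pred unfolding G_adj_def by fastforce
  qed
  then show ?thesis by (force simp: mem_FEBP_iff)
qed

lemma expanded_FEBP_not_adj:
  assumes "w \<in> expanded_FEBP" "v \<in> DLEF n k i S"
  shows "\<not> G_adj n k w v"
proof
  assume adj: "G_adj n k w v"
  from assms(1) obtain b where w: "w = ((i + (n + k) - 1) mod (n + k), b)" and bF: "(i, b) \<in> FEBP n k i S"
    by (force simp: mem_FEBP_iff)
  have bS: "(i, b) \<in> S" and b_inc: "crown_inc n k ((i + (n + k) - 1) mod (n + k)) b"
    using bF assms(1) w expanded_FEBP_subset_Inc by (auto simp: mem_FEBP_iff Inc_def)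
  show False
  proof (cases "v \<in> S - LEBP n k i S")
    case True
    obtain c d where v: "v = (c, d)" by force
    have cdS: "(c, d) \<in> S" using True v by auto
    have d_less: "crown_less n k ((i + (n + k) - 1) mod (n + k)) d" and c_less_b: "crown_less n k c b"
      using adj v w unfolding G_adj_def by auto
    have "\<not> crown_less n k i d"
      using mem_S_not_adj[OF bS cdS] c_less_b unfolding G_adj_def by auto
    then have "crown_inc n k i d"
      using crown_not_less_imp_inc i_less mem_S_crown_inc[OF cdS]
      unfolding crown_inc_def by blast
    then have "d = (i + k) mod (n + k)" using crown_less_pred_eq d_less by blast
    then have "(c, d) \<in> LEBP n k i S" using cdS bS c_less_b by (auto simp: mem_LEBP_iff)
    then show False using True v by auto
  next
    case False
    then obtain b' where "v = ((i + (n + k) - 1) mod (n + k), b')"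
      using assms(2) unfolding DLEF_eq by auto
    then show False using adj w b_inc crown_inc_imp_not_less unfolding G_adj_def by auto
  qed
qed

lemma indep_DLEF: "indep_G n k (DLEF n k i S)"
  unfolding DLEF_eq using expanded_FEBP_not_adj
  by (intro indep_G_Diff_Un indep_S expanded_FEBP_subset_Inc) (auto simp: DLEF_eq)

lemma card_DLEF: "card (DLEF n k i S) + card (LEBP n k i S) = card S + card (FEBP n k i S)"
proof -
  have "card expanded_FEBP = card (FEBP n k i S)"
    by (rule card_image_replace_fst) (simp add: mem_FEBP_iff)
  moreover have "FEBP n k i S \<subseteq> S" "LEBP n k i S \<subseteq> S"
    by (auto simp: mem_FEBP_iff mem_LEBP_iff)
  ultimately show ?thesis
    unfolding DLEF_eq using finite_S expanded_FEBP_disjoint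
    by (subst card_Diff_Un_disjoint) (auto intro: finite_subset)
qed

end

end

theorem lemma4p8:
  fixes n k i :: nat and S :: "(nat \<times> nat) set"
  assumes "n \<ge> 3" and "indep_G n k S" and "i < n + k"
  shows "indep_G n k (DFEL n k i S) \<and> indep_G n k (DLEF n k i S) \<and>
         card (DFEL n k i S) + card (DLEF n k i S) = 2 * card S"
proof -
  have "2 \<le> n" using assms(1) by simp
  note hyps = this assms(3,2)
  show ?thesis
    using indep_DFEL[OF hyps] indep_DLEF[OF hyps] card_DFEL[OF hyps] card_DLEF[OF hyps]
    by simp
qed

end
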